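(* Let $\lambda\in\mathbb{R}\setminus\{0\}$ and $x_1,x_2,y_1,y_2\in\mathbb{R}$. Then for every integer $n\ge0$, \[ C_{n,\lambda}(x_1+x_2,y_1+y_2)=\sum_{k=0}^{n}\binom{n}{k}\Big\{C_{n-k,\lambda}(x_1,y_1)C_{k,\lambda}(x_2,y_2)-S_{n-k,\lambda}(x_1,y_1)S_{k,\lambda}(x_2,y_2)\Big\} \] and \[ S_{n,\lambda}(x_1+x_2,y_1+y_2)=\sum_{k=0}^{n}\binom{n}{k}\Big\{S_{n-k,\lambda}(x_1,y_1)C_{k,\lambda}(x_2,y_2)+C_{n-k,\lambda}(x_1,y_1)S_{k,\lambda}(x_2,y_2)\Big\}. \]
   Context: All generating functions are formal power series in $t$. For $z\in\mathbb{C}$: $(z)_{0,\lambda}=1$ and $(z)_{n,\lambda}=z(z-\lambda)\cdots(z-(n-1)\lambda)$ for $n\ge1$. The degenerate exponential is $e_\lambda^{z}(t)=\sum_{n\ge0}(z)_{n,\lambda}\frac{t^n}{n!}$ (i.e. $(1+\lambda t)^{z/\lambda}$). The degenerate cosine and sine are $\cos_\lambda^{(y)}(t)=\frac{e_\lambda^{iy}(t)+e_\lambda^{-iy}(t)}{2}$ and $\sin_\lambda^{(y)}(t)=\frac{e_\lambda^{iy}(t)-e_\lambda^{-iy}(t)}{2i}$. The degenerate two-parametric polynomials $C_{n,\lambda}(x,y)$ and $S_{n,\lambda}(x,y)$ are defined by $e_\lambda^{x}(t)\cos_\lambda^{(y)}(t)=\sum_{n\ge0}C_{n,\lambda}(x,y)\frac{t^n}{n!}$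 and $e_\lambda^{x}(t)\sin_\lambda^{(y)}(t)=\sum_{n\ge0}S_{n,\lambda}(x,y)\frac{t^n}{n!}$. *)

theory Defs
  imports Complex_Main "HOL-Computational_Algebra.Formal_Power_Series"
begin

definition deg_fall :: "complex \<Rightarrow> real \<Rightarrow> nat \<Rightarrow> complex" where
  "deg_fall z lam n = (\<Prod>j<n. z - of_nat j * complex_of_real lam)"

definition deg_exp :: "real \<Rightarrow> complex \<Rightarrow> complex fps" where
  "deg_exp lam z = Abs_fps (\<lambda>n. deg_fall z lam n / fact n)"

definition deg_cos :: "real \<Rightarrow> real \<Rightarrow> complex fps" where
  "deg_cos lam y = (deg_exp lam (\<i> * of_real y) + deg_exp lam (- \<i> * of_real y)) / fps_const 2"

definition deg_sin :: "real \<Rightarrow> real \<Rightarrow> complex fps" where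
  "deg_sin lam y = (deg_exp lam (\<i> * of_real y) - deg_exp lam (- \<i> * of_real y)) / fps_const (2 * \<i>)"

definition degC :: "nat \<Rightarrow> real \<Rightarrow> real \<Rightarrow> real \<Rightarrow> complex" where
  "degC n lam x y = fact n * fps_nth (deg_exp lam (of_real x) * deg_cos lam y) n"

definition degS :: "nat \<Rightarrow> real \<Rightarrow> real \<Rightarrow> real \<Rightarrow> complex" where
  "degS n lam x y = fact n * fps_nth (deg_exp lam (of_real x) * deg_sin lam y) n"

end

theory Submission
  imports Defs
begin

text \<open>The degenerate exponential \<open>(1 + \<lambda>t)\<^sup>z\<^sup>/\<^sup>\<lambda>\<close> is the binomial series composed with
  \<open>\<lambda>t\<close> (the exponential series for \<open>\<lambda> = 0\<close>), hence multiplicative in \<open>z\<close>. So the degenerate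
  cosine and sine satisfy the usual addition laws, and comparing coefficients of \<open>t\<^sup>n/n!\<close> in the
  resulting product identities gives binomial convolutions.\<close>

lemma deg_fall_eq_gchoose:
  assumes "lam \<noteq> 0"
  shows "deg_fall z lam n / fact n = of_real lam ^ n * ((z / of_real lam) gchoose n)"
proof -
  let ?L = "complex_of_real lam"
  have "deg_fall z lam n = (\<Prod>j<n. ?L * (z / ?L - of_nat j))"
    unfolding deg_fall_def using assms by (intro prod.cong) (auto simp: field_simps)
  also have "\<dots> = ?L ^ n * (\<Prod>j=0..<n. z / ?L - of_nat j)"
    by (simp add: prod.distrib atLeast0LessThan)
  finally show ?thesis
    by (simp add: gbinomial_prod_rev)
qed

lemma deg_exp_eq_fps_binomial_compose:
  assumes "lam \<noteq> 0"
  shows "deg_exp lam z = fps_binomial (z / of_real lam) oo (fps_const (of_real lam) * fps_X)"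
  by (simp add: fps_eq_iff deg_exp_def deg_fall_eq_gchoose[OF assms])

lemma deg_exp_0: "deg_exp 0 z = fps_exp z"
  by (simp add: fps_eq_iff deg_exp_def deg_fall_def fps_exp_def)

lemma deg_exp_add: "deg_exp lam (a + b) = deg_exp lam a * deg_exp lam b"
proof (cases "lam = 0")
  case True
  then show ?thesis
    by (simp add: deg_exp_0 fps_exp_add_mult)
next
  case False
  then show ?thesis
    by (simp add: deg_exp_eq_fps_binomial_compose add_divide_distrib
        fps_binomial_add_mult fps_compose_mult_distrib)
qed

lemma deg_cos_add:
  "deg_cos lam (y1 + y2) = deg_cos lam y1 * deg_cos lam y2 - deg_sin lam y1 * deg_sin lam y2"
  and deg_sin_add:
  "deg_sin lam (y1 + y2) = deg_sin lam y1 * deg_cos lam y2 + deg_cos lam y1 * deg_sin lam y2"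
proof -
  have exp_add: "deg_exp lam (c * of_real (y1 + y2)) =
      deg_exp lam (c * of_real y1) * deg_exp lam (c * of_real y2)" for c
    by (simp add: distrib_left deg_exp_add)
  have half: "fps_const (inverse 2) + fps_const (inverse 2 :: complex) = 1"
    by (simp add: fps_const_add)
  have "fps_const (inverse (2 * \<i>)) * fps_const (inverse (2 * \<i>)) =
        - (fps_const (inverse 2) * fps_const (inverse 2 :: complex))"
    by (simp add: fps_const_mult fps_const_neg field_simps)
  with half show "deg_cos lam (y1 + y2) =
      deg_cos lam y1 * deg_cos lam y2 - deg_sin lam y1 * deg_sin lam y2"
    unfolding deg_cos_def deg_sin_def divide_fps_const exp_add by algebra
  from half show "deg_sin lam (y1 + y2) =
      deg_sin lam y1 * deg_cos lam y2 + deg_cos lam y1 * deg_sin lam y2"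
    unfolding deg_cos_def deg_sin_def divide_fps_const exp_add by algebra
qed

lemma fact_mult_fps_mult_nth:
  fixes F G :: "'a :: {comm_semiring_1, semiring_char_0} fps"
  shows "fact n * fps_nth (F * G) n =
    (\<Sum>k=0..n. of_nat (n choose k) * ((fact (n - k) * fps_nth F (n - k)) * (fact k * fps_nth G k)))"
proof -
  have "fact n * fps_nth (F * G) n = (\<Sum>k=0..n. fact n * (fps_nth G k * fps_nth F (n - k)))"
    by (simp add: fps_mult_nth sum_distrib_left mult.commute[of F])
  also have "\<dots> = (\<Sum>k=0..n. of_nat (n choose k) * ((fact (n - k) * fps_nth F (n - k)) * (fact k * fps_nth G k)))"
  proof (intro sum.cong refl)
    fix k
    assume "k \<in> {0..n}"
    then have "fact n = (of_nat (fact k * fact (n - k) * (n choose k)) :: 'a)"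
      by (simp add: binomial_fact_lemma)
    then show "fact n * (fps_nth G k * fps_nth F (n - k)) =
        of_nat (n choose k) * ((fact (n - k) * fps_nth F (n - k)) * (fact k * fps_nth G k))"
      by (simp add: mult_ac)
  qed
  finally show ?thesis .
qed

theorem theorem7:
  fixes lam x1 x2 y1 y2 :: real and n :: nat
  assumes "lam \<noteq> 0"
  shows "degC n lam (x1 + x2) (y1 + y2) =
           (\<Sum>k=0..n. of_nat (n choose k) *
              (degC (n - k) lam x1 y1 * degC k lam x2 y2 - degS (n - k) lam x1 y1 * degS k lam x2 y2)) \<and>
         degS n lam (x1 + x2) (y1 + y2) =
           (\<Sum>k=0..n. of_nat (n choose k) *
              (degS (n - k) lam x1 y1 * degC k lam x2 y2 + degC (n - k) lam x1 y1 * degS k lam x2 y2))"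
proof -
  let ?E = "\<lambda>x. deg_exp lam (of_real x)"
  have exp_add: "?E (x1 + x2) = ?E x1 * ?E x2"
    by (simp add: deg_exp_add)
  have "?E (x1 + x2) * deg_cos lam (y1 + y2) =
      (?E x1 * deg_cos lam y1) * (?E x2 * deg_cos lam y2) - (?E x1 * deg_sin lam y1) * (?E x2 * deg_sin lam y2)"
    unfolding exp_add deg_cos_add by (simp add: algebra_simps)
  moreover have "?E (x1 + x2) * deg_sin lam (y1 + y2) =
      (?E x1 * deg_sin lam y1) * (?E x2 * deg_cos lam y2) + (?E x1 * deg_cos lam y1) * (?E x2 * deg_sin lam y2)"
    unfolding exp_add deg_sin_add by (simp add: algebra_simps)
  ultimately show ?thesis
    unfolding degC_def degS_def
    by (simp add: fact_mult_fps_mult_nth right_diff_distrib distrib_left sum_subtractf sum.distrib)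
qed

end
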